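(* Let $f$ be a real-analytic function on a neighborhood of $[-1,0]$ with $f(-1)=0$ and $f'(x)<0$ for $-1\le x\le 0$. Let $D_2$ be the open triangle bounded by the segment $\{(x,0):-1\le x\le 1\}$ and the lines $y=-x-1$ and $y=x-1$ (with vertices $(-1,0)$, $(1,0)$, $(0,-1)$), and let $AC=\{(x,-x-1):-1\le x\le 0\}$. Then there exists an open set $D_1$ in the upper half-plane $y>0$, adjacent to the whole interval $\{(x,0):-1<x<1\}$ (i.e. $D=D_1\cup\{(x,0):-1<x<1\}\cup D_2$ is a domain), and a function $U\in C^1(D)\cap C^2(D_1)\cap C^2(D_2)$ satisfying $$\frac{\partial^2 U}{\partial x^2}+\operatorname{sign}(U)\,\frac{\partial^2 U}{\partial y^2}=0$$ in $D_1\cup D_2$, with $U>0$ in $D_1$, $U<0$ in $D_2$, and $U(x,-x-1)=f(x)$ for $-1\le x\le 0$. Explicitly, $U(x,y)=f\!\left(\tfrac{x-y-1}{2}\right)-f\!\left(\tfrac{x+y-1}{2}\right)$ in $D_2$, and $U(x,y)=i\left(f\!\left(\tfrac{z-1}{2}\right)-f\!\left(\tfrac{\bar z-1}{2}\right)\right)$, $z=x+iy$, in $D_1$, where $f$ denotes its holomorphic extension.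
   Context: $\operatorname{sign}(U)$ equals $1$ if $U>0$, $-1$ if $U<0$, $0$ if $U=0$. Thus the equation is the Laplace equation where $U>0$ and the wave equation where $U<0$. The lines $y=-x-1$ and $y=x-1$ are characteristics of the wave equation. *)

theory Defs
  imports "HOL-Analysis.Analysis"
begin

definition real_analytic_on :: "(real \<Rightarrow> real) \<Rightarrow> real set \<Rightarrow> bool" where
  "real_analytic_on f S \<longleftrightarrow>
     (\<forall>x\<in>S. \<exists>r>0. \<exists>a::nat \<Rightarrow> real.
        \<forall>y. \<bar>y - x\<bar> < r \<longrightarrow> (\<lambda>n. a n * (y - x) ^ n) sums f y)"

definition pdx :: "(real \<times> real \<Rightarrow> real) \<Rightarrow> real \<times> real \<Rightarrow> real" where
  "pdx U = (\<lambda>(x, y). deriv (\<lambda>t. U (t, y)) x)"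

definition pdy :: "(real \<times> real \<Rightarrow> real) \<Rightarrow> real \<times> real \<Rightarrow> real" where
  "pdy U = (\<lambda>(x, y). deriv (\<lambda>t. U (x, t)) y)"

definition C1_on :: "(real \<times> real) set \<Rightarrow> (real \<times> real \<Rightarrow> real) \<Rightarrow> bool" where
  "C1_on D U \<longleftrightarrow> continuous_on D U \<and>
     (\<forall>(x, y)\<in>D. (\<lambda>t. U (t, y)) differentiable (at x) \<and> (\<lambda>t. U (x, t)) differentiable (at y)) \<and>
     continuous_on D (pdx U) \<and> continuous_on D (pdy U)"

definition C2_on :: "(real \<times> real) set \<Rightarrow> (real \<times> real \<Rightarrow> real) \<Rightarrow> bool" where
  "C2_on D U \<longleftrightarrow> C1_on D U \<and> C1_on D (pdx U) \<and> C1_on D (pdy U)"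

definition D2 :: "(real \<times> real) set" where
  "D2 = {(x, y). y < 0 \<and> y > - x - 1 \<and> y > x - 1}"

end

theory Submission
  imports Defs "HOL-Complex_Analysis.Complex_Analysis"
begin

text \<open>
  Extend \<open>f\<close> to a holomorphic, conjugation-symmetric \<open>F\<close> near \<open>[-1, 0]\<close> and put
  \<open>K w = F ((w - 1) / 2)\<close>. Below the real axis \<open>U\<close> is d'Alembert's solution
  \<open>Re K (x - y) - Re K (x + y)\<close> of the wave equation; it equals \<open>f\<close> on \<open>AC\<close> because
  \<open>f (-1) = 0\<close>, and it is negative because \<open>f\<close> decreases. Above the axis \<open>U\<close> is the harmonic
  function \<open>Re (2 \<i> K (x + \<i> y)) = -2 Im K (x + \<i> y)\<close>. Both pieces vanish on the segment, and
  their first derivatives agree there because \<open>K\<close> and \<open>K'\<close> are real on the real axis, so \<open>U\<close>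
  is \<open>C\<^sup>1\<close> across it. Finally \<open>\<partial>\<^sub>y U = -2 Re K'\<close>, and \<open>Re K' < 0\<close> on the segment
  persists in a thin strip above it, which is taken as \<open>D1\<close>; there \<open>U > 0\<close>.
\<close>

lemma has_real_derivative_Re_affine_comp:
  assumes "(H has_field_derivative H') (at (a * complex_of_real t + b))"
  shows "((\<lambda>s. Re (c * H (a * complex_of_real s + b))) has_real_derivative Re (c * a * H')) (at t)"
proof -
  have "((\<lambda>s. a * complex_of_real s + b) has_vector_derivative a) (at t)"
    by (auto intro!: derivative_eq_intros)
  from field_vector_diff_chain_at[OF this assms]
  have "((\<lambda>s. c * H (a * complex_of_real s + b)) has_vector_derivative c * (a * H')) (at t)"
    by (auto intro: has_vector_derivative_mult_right simp: o_def)
  from bounded_linear.has_vector_derivative[OF bounded_linear_Re this]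
  show ?thesis by (simp add: has_real_derivative_iff_has_vector_derivative mult.assoc)
qed

lemma Im_deriv_eq_0_if_real_on_reals:
  assumes "F holomorphic_on S" "open S" "complex_of_real t \<in> S"
    and real: "\<And>s. complex_of_real s \<in> S \<Longrightarrow> Im (F (complex_of_real s)) = 0"
  shows "Im (deriv F (complex_of_real t)) = 0"
proof -
  have "(F has_field_derivative deriv F (1 * complex_of_real t + 0)) (at (1 * complex_of_real t + 0))"
    using holomorphic_derivI[OF assms(1-3)] by simp
  from has_real_derivative_Re_affine_comp[OF this, of "- \<i>"]
  have "((\<lambda>s. Im (F (complex_of_real s))) has_real_derivative Im (deriv F (complex_of_real t))) (at t)"
    by simp
  moreover have "((\<lambda>s. Im (F (complex_of_real s))) has_real_derivative 0) (at t)"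
    by (rule has_field_derivative_transform_within_open[of "\<lambda>_. 0" 0 t "complex_of_real -` S"])
       (use assms(2,3) real in \<open>auto intro: open_vimage continuous_intros\<close>)
  ultimately show ?thesis by (rule DERIV_unique)
qed

lemma has_real_derivative_real_restriction:
  assumes "F holomorphic_on S" "open S" "complex_of_real t \<in> S"
    and real: "\<And>s. complex_of_real s \<in> S \<Longrightarrow> F (complex_of_real s) = complex_of_real (f s)"
  shows "(f has_real_derivative Re (deriv F (complex_of_real t))) (at t)"
proof -
  have "(F has_field_derivative deriv F (1 * complex_of_real t + 0)) (at (1 * complex_of_real t + 0))"
    using holomorphic_derivI[OF assms(1-3)] by simp
  from has_real_derivative_Re_affine_comp[OF this, of 1]
  have "((\<lambda>s. Re (F (complex_of_real s))) has_real_derivative Re (deriv F (complex_of_real t))) (at t)"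
    by simp
  then show ?thesis
    by (rule has_field_derivative_transform_within_open[where S = "complex_of_real -` S"])
       (use assms(2,3) real in \<open>auto intro: open_vimage continuous_intros\<close>)
qed

section \<open>Holomorphic extension of real-analytic functions\<close>

lemma real_power_series_holomorphic:
  fixes a :: "nat \<Rightarrow> real" and f :: "real \<Rightarrow> real" and x r :: real
  defines "P \<equiv> \<lambda>z. \<Sum>n. complex_of_real (a n) * (z - complex_of_real x) ^ n"
  assumes sums: "\<And>y. \<bar>y - x\<bar> < r \<Longrightarrow> (\<lambda>n. a n * (y - x) ^ n) sums f y"
  shows "P holomorphic_on ball (complex_of_real x) r"
    and "\<And>y. \<bar>y - x\<bar> < r \<Longrightarrow> P (complex_of_real y) = complex_of_real (f y)"
    and "\<And>z. z \<in> ball (complex_of_real x) r \<Longrightarrow> P (cnj z) = cnj (P z)"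
proof -
  have radius: "conv_radius (\<lambda>n. complex_of_real (a n)) \<ge> r"
  proof (rule conv_radius_geI_ex')
    fix s :: real assume "0 < s" "ereal s < r"
    then have "(\<lambda>n. a n * ((x + s) - x) ^ n) sums f (x + s)" by (intro sums) auto
    then have "summable (\<lambda>n. complex_of_real (a n * s ^ n))"
      by (simp only: summable_of_real_iff sums_iff) simp
    then show "summable (\<lambda>n. complex_of_real (a n) * complex_of_real s ^ n)" by simp
  qed
  have in_radius: "ereal (norm (z - complex_of_real x)) < conv_radius (\<lambda>n. complex_of_real (a n))"
    if "z \<in> ball (complex_of_real x) r" for z
  proof -
    have "norm (z - complex_of_real x) < r" using that by (simp add: dist_norm norm_minus_commute)
    then have "ereal (norm (z - complex_of_real x)) < ereal r" by simp
    then show ?thesis using radius by (rule less_le_trans)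
  qed
  show "P holomorphic_on ball (complex_of_real x) r"
    unfolding holomorphic_on_open[OF open_ball]
  proof
    fix z assume "z \<in> ball (complex_of_real x) r"
    from DERIV_chain2[OF has_field_derivative_powser[OF in_radius[OF this]]
        DERIV_diff[OF DERIV_ident DERIV_const]]
    show "\<exists>P'. (P has_field_derivative P') (at z)" by (auto simp: P_def)
  qed
  show "P (complex_of_real y) = complex_of_real (f y)" if "\<bar>y - x\<bar> < r" for y
  proof -
    have "(\<lambda>n. complex_of_real (a n * (y - x) ^ n)) sums complex_of_real (f y)"
      using sums_of_real[OF sums[OF that]] .
    then show ?thesis by (simp add: P_def sums_iff)
  qed
  show "P (cnj z) = cnj (P z)" if "z \<in> ball (complex_of_real x) r" for z
  proof -
    have "(\<lambda>n. cnj (complex_of_real (a n) * (z - complex_of_real x) ^ n)) sums cnj (P z)"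
      unfolding sums_cnj using summable_in_conv_radius[OF in_radius[OF that]] by (simp add: P_def summable_sums)
    then show ?thesis by (simp add: P_def sums_iff)
  qed
qed

lemma holomorphic_eq_on_real_centred_balls:
  assumes P: "P holomorphic_on ball (complex_of_real x) r"
    and Q: "Q holomorphic_on ball (complex_of_real x') r'"
    and eq_real: "\<And>t. complex_of_real t \<in> ball (complex_of_real x) r \<inter> ball (complex_of_real x') r'
                    \<Longrightarrow> P (complex_of_real t) = Q (complex_of_real t)"
    and z: "z \<in> ball (complex_of_real x) r \<inter> ball (complex_of_real x') r'"
  shows "P z = Q z"
proof -
  \<comment> \<open>\<open>Re z\<close> lies in both balls and is a limit point of the real points of their intersection.\<close>
  define I where "I = ball (complex_of_real x) r \<inter> ball (complex_of_real x') r'"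
  define \<xi> where "\<xi> = complex_of_real (Re z)"
  have in_ball: "\<xi> \<in> ball (complex_of_real c) \<rho>" if "z \<in> ball (complex_of_real c) \<rho>" for c \<rho>
  proof -
    have "dist (complex_of_real c) \<xi> = \<bar>Re (complex_of_real c - z)\<bar>"
      by (simp add: \<xi>_def dist_real_def)
    also have "\<dots> \<le> dist (complex_of_real c) z" unfolding dist_norm by (rule abs_Re_le_cmod)
    finally show ?thesis using that by simp
  qed
  have \<xi>: "\<xi> \<in> I" using z in_ball by (simp add: I_def)
  have "open I" "connected I"
    unfolding I_def by (simp_all add: open_Int convex_connected convex_Int)
  obtain \<delta> where \<delta>: "\<delta> > 0" "ball \<xi> \<delta> \<subseteq> I"
    using \<open>open I\<close> \<xi> open_contains_ball by blast
  have limpt: "\<xi> islimpt I \<inter> \<real>"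
    unfolding islimpt_approachable
  proof (intro allI impI)
    fix e :: real assume "e > 0"
    define w where "w = \<xi> + complex_of_real (min e \<delta> / 2)"
    have dist_w: "dist w \<xi> = min e \<delta> / 2" using \<open>e > 0\<close> \<delta> by (simp add: w_def dist_norm)
    then have "w \<in> ball \<xi> \<delta>" using \<delta>(1) \<open>e > 0\<close> by (simp add: dist_commute)
    then have "w \<in> I" using \<delta>(2) by blast
    moreover have "w \<in> \<real>" by (simp add: w_def \<xi>_def)
    moreover have "w \<noteq> \<xi>" "dist w \<xi> < e" using dist_w \<open>e > 0\<close> \<delta>(1) by auto
    ultimately show "\<exists>w\<in>I \<inter> \<real>. w \<noteq> \<xi> \<and> dist w \<xi> < e" by blast
  qed
  have zero: "P w - Q w = 0" if "w \<in> I \<inter> \<real>" for w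
    using that eq_real by (auto simp: I_def elim!: Reals_cases)
  have holo: "(\<lambda>w. P w - Q w) holomorphic_on I"
    using holomorphic_on_subset[OF P, of I] holomorphic_on_subset[OF Q, of I]
    by (auto simp: I_def intro!: holomorphic_on_diff)
  have "P z - Q z = 0"
    by (rule analytic_continuation[OF holo \<open>open I\<close> \<open>connected I\<close> Int_lower1 \<xi> limpt zero])
       (use z in \<open>unfold I_def\<close>)
  then show ?thesis by simp
qed

lemma real_analytic_on_holomorphic_extension:
  assumes "real_analytic_on f A"
  obtains S F where "open S" "F holomorphic_on S" "complex_of_real ` A \<subseteq> S"
    "\<And>z. z \<in> S \<Longrightarrow> cnj z \<in> S \<and> F (cnj z) = cnj (F z)"
    "\<And>t. complex_of_real t \<in> S \<Longrightarrow> F (complex_of_real t) = complex_of_real (f t)"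
proof -
  obtain r a where ra: "\<And>x. x \<in> A \<Longrightarrow>
      r x > 0 \<and> (\<forall>y. \<bar>y - x\<bar> < r x \<longrightarrow> (\<lambda>n. a x n * (y - x) ^ n) sums f y)"
    using assms unfolding real_analytic_on_def by metis
  then have r: "\<And>x. x \<in> A \<Longrightarrow> r x > 0"
    and sums: "\<And>x y. x \<in> A \<Longrightarrow> \<bar>y - x\<bar> < r x \<Longrightarrow> (\<lambda>n. a x n * (y - x) ^ n) sums f y"
    by blast+
  define P where "P x z = (\<Sum>n. complex_of_real (a x n) * (z - complex_of_real x) ^ n)" for x z
  define B where "B x = ball (complex_of_real x) (r x)" for x
  have P: "P x holomorphic_on B x"
      "\<And>y. \<bar>y - x\<bar> < r x \<Longrightarrow> P x (complex_of_real y) = complex_of_real (f y)"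
      "\<And>z. z \<in> B x \<Longrightarrow> P x (cnj z) = cnj (P x z)" if "x \<in> A" for x
    using real_power_series_holomorphic[where a="a x" and x=x and r="r x" and f=f] sums[OF that]
    unfolding P_def[abs_def] B_def by blast+
  have real_in_B: "complex_of_real t \<in> B x \<longleftrightarrow> \<bar>t - x\<bar> < r x" for t x
    by (simp add: B_def dist_norm abs_minus_commute flip: of_real_diff)
  have cnj_in_B: "cnj z \<in> B x" if "z \<in> B x" for x z
  proof -
    have "dist (complex_of_real x) (cnj z) = cmod (cnj (complex_of_real x - z))"
      by (simp add: dist_norm)
    also have "\<dots> = dist (complex_of_real x) z" by (simp only: complex_mod_cnj dist_norm)
    finally show ?thesis using that by (simp add: B_def)
  qed
  have agree: "P x z = P x' z" if "x \<in> A" "x' \<in> A" "z \<in> B x" "z \<in> B x'" for x x' z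
  proof (rule holomorphic_eq_on_real_centred_balls[OF P(1)[OF that(1), unfolded B_def]
        P(1)[OF that(2), unfolded B_def]])
    fix t assume "complex_of_real t \<in> ball (complex_of_real x) (r x) \<inter> ball (complex_of_real x') (r x')"
    then have "\<bar>t - x\<bar> < r x" "\<bar>t - x'\<bar> < r x'" unfolding Int_iff real_in_B[unfolded B_def] by auto
    then show "P x (complex_of_real t) = P x' (complex_of_real t)"
      using P(2) that(1,2) by simp
  qed (use that in \<open>simp add: B_def\<close>)
  define S where "S = (\<Union>x\<in>A. B x)"
  define F where "F z = P (SOME x. x \<in> A \<and> z \<in> B x) z" for z
  have F: "F z = P x z" if "x \<in> A" "z \<in> B x" for x z
    unfolding F_def by (rule someI2[of _ x]) (use that agree in blast)+
  show ?thesis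
  proof
    show "open S" unfolding S_def B_def by auto
    show "F holomorphic_on S"
      unfolding S_def
    proof (rule holomorphic_on_UN_open)
      fix x assume "x \<in> A"
      show "F holomorphic_on B x"
        by (rule holomorphic_transform[OF P(1)[OF \<open>x \<in> A\<close>]]) (use F \<open>x \<in> A\<close> in simp)
    qed (auto simp: B_def)
    show "complex_of_real ` A \<subseteq> S" using r by (auto simp: S_def real_in_B)
    show "cnj z \<in> S \<and> F (cnj z) = cnj (F z)" if "z \<in> S" for z
    proof -
      obtain x where x: "x \<in> A" "z \<in> B x" using \<open>z \<in> S\<close> by (auto simp: S_def)
      then have "cnj z \<in> B x" by (simp add: cnj_in_B)
      then show ?thesis using x F[OF x(1)] P(3)[OF x] by (auto simp: S_def)
    qed
    show "F (complex_of_real t) = complex_of_real (f t)" if "complex_of_real t \<in> S" for t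
      using that F P(2) by (auto simp: S_def real_in_B)
  qed
qed

definition has_continuous_partials_on ::
    "(real \<times> real) set \<Rightarrow> (real \<times> real \<Rightarrow> real) \<Rightarrow> (real \<times> real \<Rightarrow> real) \<Rightarrow> (real \<times> real \<Rightarrow> real) \<Rightarrow> bool"
  where "has_continuous_partials_on D U Ux Uy \<longleftrightarrow>
    continuous_on D U \<and> continuous_on D Ux \<and> continuous_on D Uy \<and>
    (\<forall>(x, y)\<in>D. ((\<lambda>t. U (t, y)) has_real_derivative Ux (x, y)) (at x) \<and>
                ((\<lambda>t. U (x, t)) has_real_derivative Uy (x, y)) (at y))"

lemma pdx_eqI: "((\<lambda>t. U (t, y)) has_real_derivative L) (at x) \<Longrightarrow> pdx U (x, y) = L"
  unfolding pdx_def by (simp add: DERIV_imp_deriv)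

lemma pdy_eqI: "((\<lambda>t. U (x, t)) has_real_derivative L) (at y) \<Longrightarrow> pdy U (x, y) = L"
  unfolding pdy_def by (simp add: DERIV_imp_deriv)

lemma has_continuous_partials_onD:
  assumes "has_continuous_partials_on D U Ux Uy" "p \<in> D"
  shows "pdx U p = Ux p" "pdy U p = Uy p"
  using assms by (auto simp: has_continuous_partials_on_def intro!: pdx_eqI pdy_eqI)

lemma has_continuous_partials_on_imp_C1_on:
  assumes "has_continuous_partials_on D U Ux Uy"
  shows "C1_on D U"
proof -
  have "continuous_on D (pdx U)" "continuous_on D (pdy U)"
    using assms has_continuous_partials_onD[OF assms]
    by (auto simp: has_continuous_partials_on_def intro: continuous_on_eq)
  then show ?thesis
    using assms by (fastforce simp: C1_on_def has_continuous_partials_on_def real_differentiable_def)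
qed

lemma has_continuous_partials_on_eq_open:
  assumes "open D" "\<And>q. q \<in> D \<Longrightarrow> U q = V q" "has_continuous_partials_on D V Ux Uy"
  shows "has_continuous_partials_on D U Ux Uy"
  unfolding has_continuous_partials_on_def
proof (intro conjI ballI)
  show "continuous_on D U" "continuous_on D Ux" "continuous_on D Uy"
    using assms continuous_on_cong[OF refl assms(2)] by (auto simp: has_continuous_partials_on_def)
  fix p assume "p \<in> D"
  obtain x y where p: "p = (x, y)" by fastforce
  have slices: "open ((\<lambda>t. (t, y)) -` D)" "open ((\<lambda>t. (x, t)) -` D)"
    by (intro open_vimage assms(1) continuous_intros)+
  have V: "((\<lambda>t. V (t, y)) has_real_derivative Ux (x, y)) (at x)"
       "((\<lambda>t. V (x, t)) has_real_derivative Uy (x, y)) (at y)"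
    using assms(3) \<open>p \<in> D\<close> by (auto simp: has_continuous_partials_on_def p)
  have "((\<lambda>t. U (t, y)) has_real_derivative Ux (x, y)) (at x)"
    by (rule has_field_derivative_transform_within_open[OF V(1) slices(1)])
       (use \<open>p \<in> D\<close> assms(2) p in simp_all)
  moreover have "((\<lambda>t. U (x, t)) has_real_derivative Uy (x, y)) (at y)"
    by (rule has_field_derivative_transform_within_open[OF V(2) slices(2)])
       (use \<open>p \<in> D\<close> assms(2) p in simp_all)
  ultimately show "case p of (x, y) \<Rightarrow> ((\<lambda>t. U (t, y)) has_real_derivative Ux (x, y)) (at x) \<and>
      ((\<lambda>t. U (x, t)) has_real_derivative Uy (x, y)) (at y)" by (simp add: p)
qed

lemma C2_onI:
  assumes "open D" "has_continuous_partials_on D U Ux Uy"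
    and "has_continuous_partials_on D Ux Uxx Uxy" "has_continuous_partials_on D Uy Uyx Uyy"
  shows "C2_on D U"
    and "\<And>p. p \<in> D \<Longrightarrow> pdx (pdx U) p = Uxx p" "\<And>p. p \<in> D \<Longrightarrow> pdy (pdy U) p = Uyy p"
proof -
  have "has_continuous_partials_on D (pdx U) Uxx Uxy" "has_continuous_partials_on D (pdy U) Uyx Uyy"
    using assms has_continuous_partials_onD[OF assms(2)]
    by (auto intro: has_continuous_partials_on_eq_open)
  then show "C2_on D U" "\<And>p. p \<in> D \<Longrightarrow> pdx (pdx U) p = Uxx p" "\<And>p. p \<in> D \<Longrightarrow> pdy (pdy U) p = Uyy p"
    using assms(2) has_continuous_partials_onD
    by (auto simp: C2_on_def intro: has_continuous_partials_on_imp_C1_on)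
qed

section \<open>Harmonic functions and solutions of the wave equation\<close>

definition re_hderiv :: "(complex \<Rightarrow> complex) \<Rightarrow> complex \<Rightarrow> nat \<Rightarrow> real \<times> real \<Rightarrow> real" where
  "re_hderiv G c k p = Re (c * (deriv ^^ k) G (Complex (fst p) (snd p)))"

lemma has_continuous_partials_on_re_hderiv:
  assumes "G holomorphic_on S" "open S" "\<And>x y. (x, y) \<in> D \<Longrightarrow> Complex x y \<in> S"
  shows "has_continuous_partials_on D (re_hderiv G c k) (re_hderiv G c (Suc k)) (re_hderiv G (c * \<i>) (Suc k))"
  unfolding has_continuous_partials_on_def
proof (intro conjI ballI)
  have holo: "(deriv ^^ j) G holomorphic_on S" for j
    by (rule holomorphic_higher_deriv[OF assms(1,2)])
  have "continuous_on D (\<lambda>p. (deriv ^^ j) G (Complex (fst p) (snd p)))" for j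
    by (rule continuous_on_compose2[OF holomorphic_on_imp_continuous_on[OF holo]])
       (use assms(3) in \<open>auto intro!: continuous_intros\<close>)
  then have "continuous_on D (re_hderiv G c' j)" for c' j
    unfolding re_hderiv_def by (intro continuous_intros)
  then show "continuous_on D (re_hderiv G c k)" "continuous_on D (re_hderiv G c (Suc k))"
      "continuous_on D (re_hderiv G (c * \<i>) (Suc k))" by this+
  fix p assume "p \<in> D"
  obtain x y where p: "p = (x, y)" by fastforce
  have der: "((deriv ^^ k) G has_field_derivative (deriv ^^ Suc k) G z) (at z)" if "z \<in> S" for z
    using holomorphic_derivI[OF holo assms(2) that] by simp
  have xy: "Complex x y \<in> S" using assms(3) \<open>p \<in> D\<close> by (simp add: p)
  have lines: "1 * complex_of_real t + \<i> * y = Complex t y" "\<i> * complex_of_real t + x = Complex x t" for t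
    by (simp_all add: complex_eq_iff)
  have "((\<lambda>t. Re (c * (deriv ^^ k) G (1 * complex_of_real t + \<i> * y))) has_real_derivative
      Re (c * 1 * (deriv ^^ Suc k) G (1 * complex_of_real x + \<i> * y))) (at x)"
    by (rule has_real_derivative_Re_affine_comp[OF der]) (use xy in \<open>simp only: lines\<close>)
  moreover have "((\<lambda>t. Re (c * (deriv ^^ k) G (\<i> * complex_of_real t + x))) has_real_derivative
      Re (c * \<i> * (deriv ^^ Suc k) G (\<i> * complex_of_real y + x))) (at y)"
    by (rule has_real_derivative_Re_affine_comp[OF der]) (use xy in \<open>simp only: lines\<close>)
  ultimately have "((\<lambda>t. re_hderiv G c k (t, y)) has_real_derivative re_hderiv G c (Suc k) (x, y)) (at x)"
    "((\<lambda>t. re_hderiv G c k (x, t)) has_real_derivative re_hderiv G (c * \<i>) (Suc k) (x, y)) (at y)"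
    by (simp_all only: re_hderiv_def lines fst_conv snd_conv mult_1_right)
  then show "case p of (x, y) \<Rightarrow> ((\<lambda>t. re_hderiv G c k (t, y)) has_real_derivative re_hderiv G c (Suc k) (x, y)) (at x) \<and>
      ((\<lambda>t. re_hderiv G c k (x, t)) has_real_derivative re_hderiv G (c * \<i>) (Suc k) (x, y)) (at y)"
    by (simp add: p)
qed

lemma re_holomorphic_C2_harmonic:
  assumes "G holomorphic_on S" "open S" "open D" "\<And>x y. (x, y) \<in> D \<Longrightarrow> Complex x y \<in> S"
    and U: "\<And>p. p \<in> D \<Longrightarrow> U p = Re (c * G (Complex (fst p) (snd p)))"
  shows "C2_on D U" and "\<And>p. p \<in> D \<Longrightarrow> pdx (pdx U) p + pdy (pdy U) p = 0"
proof -
  have partials: "has_continuous_partials_on D (re_hderiv G c' k)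
      (re_hderiv G c' (Suc k)) (re_hderiv G (c' * \<i>) (Suc k))" for c' k
    using assms(1,2,4) by (rule has_continuous_partials_on_re_hderiv)
  have "has_continuous_partials_on D U (re_hderiv G c (Suc 0)) (re_hderiv G (c * \<i>) (Suc 0))"
    by (rule has_continuous_partials_on_eq_open[OF assms(3) _ partials[of c 0]])
       (simp add: U re_hderiv_def)
  note C2 = C2_onI[OF assms(3) this partials partials]
  show "C2_on D U" by (rule C2(1))
  show "pdx (pdx U) p + pdy (pdy U) p = 0" if "p \<in> D" for p
    using C2(2,3)[OF that] by (simp add: re_hderiv_def algebra_simps)
qed

definition dalembert :: "(nat \<Rightarrow> real \<Rightarrow> real) \<Rightarrow> real \<Rightarrow> real \<Rightarrow> nat \<Rightarrow> real \<times> real \<Rightarrow> real" where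
  "dalembert g a b k p = a * g k (fst p - snd p) + b * g k (fst p + snd p)"

lemma has_continuous_partials_on_dalembert:
  assumes g: "\<And>k t. t \<in> I \<Longrightarrow> (g k has_real_derivative g (Suc k) t) (at t)"
    and D: "\<And>x y. (x, y) \<in> D \<Longrightarrow> x - y \<in> I \<and> x + y \<in> I"
  shows "has_continuous_partials_on D (dalembert g a b k)
           (dalembert g a b (Suc k)) (dalembert g (- a) b (Suc k))"
  unfolding has_continuous_partials_on_def
proof (intro conjI ballI)
  have g_cont: "continuous_on I (g j)" for j
    using g by (blast intro: continuous_at_imp_continuous_on DERIV_isCont)
  have "continuous_on D (\<lambda>p. g j (fst p - snd p))" for j
    by (rule continuous_on_compose2[OF g_cont]) (auto intro!: continuous_intros dest: D)
  moreover have "continuous_on D (\<lambda>p. g j (fst p + snd p))" for j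
    by (rule continuous_on_compose2[OF g_cont]) (auto intro!: continuous_intros dest: D)
  ultimately have "continuous_on D (dalembert g a' b' j)" for a' b' j
    unfolding dalembert_def by (intro continuous_intros)
  then show "continuous_on D (dalembert g a b k)" "continuous_on D (dalembert g a b (Suc k))"
      "continuous_on D (dalembert g (- a) b (Suc k))" by this+
  fix p assume "p \<in> D"
  obtain x y where p: "p = (x, y)" by fastforce
  have I: "x - y \<in> I" "x + y \<in> I" using D \<open>p \<in> D\<close> by (auto simp: p)
  have chain: "((\<lambda>t. g k (a * t + b)) has_real_derivative g (Suc k) (a * s + b) * a) (at s)"
    if "a * s + b \<in> I" for a b s
  proof (rule DERIV_chain2[where f="g k" and g="\<lambda>t. a * t + b" and x=s, OF g[OF that]])
    show "((\<lambda>t. a * t + b) has_real_derivative a) (at s)" by (auto intro!: derivative_eq_intros)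
  qed
  have "((\<lambda>t. a * g k (1 * t + - y) + b * g k (1 * t + y)) has_real_derivative
      a * (g (Suc k) (1 * x + - y) * 1) + b * (g (Suc k) (1 * x + y) * 1)) (at x)"
    by (intro DERIV_add DERIV_cmult chain) (use I in simp_all)
  moreover have "((\<lambda>t. a * g k (- 1 * t + x) + b * g k (1 * t + x)) has_real_derivative
      a * (g (Suc k) (- 1 * y + x) * - 1) + b * (g (Suc k) (1 * y + x) * 1)) (at y)"
    by (intro DERIV_add DERIV_cmult chain) (use I in \<open>simp_all add: add.commute\<close>)
  ultimately show "case p of (x, y) \<Rightarrow>
      ((\<lambda>t. dalembert g a b k (t, y)) has_real_derivative dalembert g a b (Suc k) (x, y)) (at x) \<and>
      ((\<lambda>t. dalembert g a b k (x, t)) has_real_derivative dalembert g (- a) b (Suc k) (x, y)) (at y)"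
    by (simp add: p dalembert_def add.commute)
qed

lemma dalembert_C2_wave:
  assumes g: "\<And>k t. t \<in> I \<Longrightarrow> (g k has_real_derivative g (Suc k) t) (at t)"
    and "open D" "\<And>x y. (x, y) \<in> D \<Longrightarrow> x - y \<in> I \<and> x + y \<in> I"
    and U: "\<And>p. p \<in> D \<Longrightarrow> U p = a * g 0 (fst p - snd p) + b * g 0 (fst p + snd p)"
  shows "C2_on D U" and "\<And>p. p \<in> D \<Longrightarrow> pdx (pdx U) p = pdy (pdy U) p"
proof -
  have partials: "has_continuous_partials_on D (dalembert g a' b' k)
      (dalembert g a' b' (Suc k)) (dalembert g (- a') b' (Suc k))" for a' b' k
    using g assms(3) by (rule has_continuous_partials_on_dalembert)
  have "has_continuous_partials_on D U (dalembert g a b (Suc 0)) (dalembert g (- a) b (Suc 0))"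
    by (rule has_continuous_partials_on_eq_open[OF assms(2) _ partials[of a b 0]])
       (simp add: U dalembert_def)
  note C2 = C2_onI[OF assms(2) this partials partials]
  show "C2_on D U" by (rule C2(1))
  show "pdx (pdx U) p = pdy (pdy U) p" if "p \<in> D" for p
    using C2(2,3)[OF that] by simp
qed

section \<open>Gluing across a horizontal line\<close>

lemma has_real_derivative_paste_at:
  fixes g h :: "real \<Rightarrow> real"
  assumes g: "(g has_real_derivative L) (at a)" and h: "(h has_real_derivative L) (at a)"
    and "g a = h a"
  shows "((\<lambda>t. if a < t then h t else g t) has_real_derivative L) (at a)"
proof -
  have "((\<lambda>t. if a < t then h t else g t) has_real_derivative L) (at a within {..a})"
    by (rule has_field_derivative_transform_within[OF has_field_derivative_at_within[OF g] zero_less_one])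
       auto
  moreover have "((\<lambda>t. if a < t then h t else g t) has_real_derivative L) (at a within {a..})"
    by (rule has_field_derivative_transform_within[OF has_field_derivative_at_within[OF h] zero_less_one])
       (use \<open>g a = h a\<close> in \<open>auto simp: less_eq_real_def\<close>)
  moreover have "at a = at a within ({..a} \<union> {a..})"
  proof -
    have "{..a} \<union> {a..} = UNIV" by auto
    then show ?thesis by simp
  qed
  ultimately show ?thesis unfolding has_field_derivative_iff by (simp add: Lim_within_Un)
qed

lemma continuous_on_paste_horizontal:
  fixes D :: "(real \<times> real) set"
  assumes "continuous_on (D \<inter> {p. 0 \<le> snd p}) f" "continuous_on (D \<inter> {p. snd p \<le> 0}) g"
    and "\<And>p. p \<in> D \<Longrightarrow> snd p = 0 \<Longrightarrow> f p = g p"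
  shows "continuous_on D (\<lambda>p. if 0 < snd p then f p else g p)"
proof -
  have D: "D = D \<inter> {p. 0 \<le> snd p} \<union> D \<inter> {p. snd p \<le> 0}" by (auto simp: not_le less_imp_le)
  have "closedin (top_of_set D) (D \<inter> {p. 0 \<le> snd p})" "closedin (top_of_set D) (D \<inter> {p. snd p \<le> 0})"
    by (intro closedin_closed_Int closed_Collect_le continuous_intros)+
  then show ?thesis
    by (subst D, intro continuous_on_cases_local) (use assms in \<open>auto simp flip: D\<close>)
qed

lemma has_continuous_partials_on_paste_horizontal:
  assumes A: "has_continuous_partials_on (D \<inter> {p. 0 \<le> snd p}) A Ax Ay"
    and B: "has_continuous_partials_on (D \<inter> {p. snd p \<le> 0}) B Bx By"
    and seam: "\<And>x. (x, 0) \<in> D \<Longrightarrow> A (x, 0) = B (x, 0) \<and> Ax (x, 0) = Bx (x, 0) \<and> Ay (x, 0) = By (x, 0)"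
  shows "has_continuous_partials_on D (\<lambda>p. if 0 < snd p then A p else B p)
           (\<lambda>p. if 0 < snd p then Ax p else Bx p) (\<lambda>p. if 0 < snd p then Ay p else By p)"
proof -
  let ?U = "\<lambda>p. if 0 < snd p then A p else B p"
  have der: "((\<lambda>t. ?U (t, y)) has_real_derivative (if 0 < y then Ax (x, y) else Bx (x, y))) (at x) \<and>
        ((\<lambda>t. ?U (x, t)) has_real_derivative (if 0 < y then Ay (x, y) else By (x, y))) (at y)"
    if "(x, y) \<in> D" for x y
  proof
    have dA: "((\<lambda>t. A (t, y)) has_real_derivative Ax (x, y)) (at x)"
         "((\<lambda>t. A (x, t)) has_real_derivative Ay (x, y)) (at y)" if "0 \<le> y"
      using A \<open>(x, y) \<in> D\<close> that by (auto simp: has_continuous_partials_on_def)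
    have dB: "((\<lambda>t. B (t, y)) has_real_derivative Bx (x, y)) (at x)"
         "((\<lambda>t. B (x, t)) has_real_derivative By (x, y)) (at y)" if "y \<le> 0"
      using B \<open>(x, y) \<in> D\<close> that by (auto simp: has_continuous_partials_on_def)
    show "((\<lambda>t. ?U (t, y)) has_real_derivative (if 0 < y then Ax (x, y) else Bx (x, y))) (at x)"
      using dA(1) dB(1) by (cases "0 < y") simp_all
    show "((\<lambda>t. ?U (x, t)) has_real_derivative (if 0 < y then Ay (x, y) else By (x, y))) (at y)"
    proof (cases y "0::real" rule: linorder_cases)
      case less
      have "((\<lambda>t. ?U (x, t)) has_real_derivative By (x, y)) (at y)"
        by (rule has_field_derivative_transform_within_open[OF dB(2) open_lessThan])
           (use less in auto)
      then show ?thesis using less by simp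
    next
      case greater
      have "((\<lambda>t. ?U (x, t)) has_real_derivative Ay (x, y)) (at y)"
        by (rule has_field_derivative_transform_within_open[OF dA(2) open_greaterThan])
           (use greater in auto)
      then show ?thesis using greater by simp
    next
      case equal
      have "((\<lambda>t. B (x, t)) has_real_derivative By (x, 0)) (at 0)"
        "((\<lambda>t. A (x, t)) has_real_derivative By (x, 0)) (at 0)" "B (x, 0) = A (x, 0)"
        using dA(2) dB(2) seam \<open>(x, y) \<in> D\<close> equal by simp_all
      from has_real_derivative_paste_at[OF this] show ?thesis using equal by simp
    qed
  qed
  have seam': "\<And>p. p \<in> D \<Longrightarrow> snd p = 0 \<Longrightarrow> A p = B p \<and> Ax p = Bx p \<and> Ay p = By p"
    using seam by (metis prod.collapse)
  show ?thesis
    unfolding has_continuous_partials_on_def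
  proof (intro conjI; (clarify)?)
    show "continuous_on D ?U" "continuous_on D (\<lambda>p. if 0 < snd p then Ax p else Bx p)"
      "continuous_on D (\<lambda>p. if 0 < snd p then Ay p else By p)"
      using A B seam' unfolding has_continuous_partials_on_def
      by (blast intro: continuous_on_paste_horizontal)+
  qed (use der in simp)
qed

lemma open_D2: "open D2"
proof -
  have D2_eq: "D2 = {p. snd p < 0} \<inter> {p. - fst p - 1 < snd p} \<inter> {p. fst p - 1 < snd p}"
    by (auto simp: D2_def)
  show ?thesis unfolding D2_eq by (intro open_Int open_Collect_less continuous_intros)
qed

locale mixed_problem =
  fixes K :: "complex \<Rightarrow> complex" and S :: "complex set" and \<delta> :: real
  assumes open_S: "open S" and holo: "K holomorphic_on S"
    and real_on_reals: "\<And>t. complex_of_real t \<in> S \<Longrightarrow> Im (K (complex_of_real t)) = 0"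
    and \<delta>_pos: "0 < \<delta>"
    and strip: "\<And>x y. -1 < x \<Longrightarrow> x < 1 \<Longrightarrow> \<bar>y\<bar> < \<delta> \<Longrightarrow>
                  Complex x y \<in> S \<and> Re (deriv K (Complex x y)) < 0"
begin

definition D1 :: "(real \<times> real) set" where
  "D1 = {(x, y). -1 < x \<and> x < 1 \<and> 0 < y \<and> y < \<delta>}"

definition U :: "real \<times> real \<Rightarrow> real" where
  "U p = (if 0 < snd p then Re (2 * \<i> * K (Complex (fst p) (snd p)))
          else Re (K (fst p - snd p)) - Re (K (fst p + snd p)))"

abbreviation D :: "(real \<times> real) set" where
  "D \<equiv> D1 \<union> {(x, 0) | x. -1 < x \<and> x < 1} \<union> D2"

lemma D_eq: "D = {(x, y). -1 < x \<and> x < 1 \<and> y < \<delta> \<and> -1 < x + y \<and> x - y < 1}"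
  using \<delta>_pos by (auto simp: D1_def D2_def)

lemma open_D: "open D" and connected_D: "connected D"
proof -
  have "D = {p. inner (-1, 0) p < 1} \<inter> {p. inner (1, 0) p < 1} \<inter> {p. inner (0, 1) p < \<delta>}
        \<inter> {p. inner (-1, -1) p < 1} \<inter> {p. inner (1, -1) p < (1::real)}"
    unfolding D_eq by auto
  then show "open D" "connected D"
    by (simp_all add: open_Int open_halfspace_lt convex_connected convex_Int convex_halfspace_lt)
qed

lemma strip_in_S: "-1 < x \<Longrightarrow> x < 1 \<Longrightarrow> \<bar>y\<bar> < \<delta> \<Longrightarrow> Complex x y \<in> S"
  using strip by blast

lemma real_in_S: "-1 < t \<Longrightarrow> t < 1 \<Longrightarrow> complex_of_real t \<in> S"
  using strip_in_S[of t 0] \<delta>_pos by (simp add: complex_of_real_def)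

definition line_deriv :: "nat \<Rightarrow> real \<Rightarrow> real" where
  "line_deriv k t = Re ((deriv ^^ k) K (complex_of_real t))"

lemma line_deriv_has_derivative:
  assumes "complex_of_real t \<in> S"
  shows "(line_deriv k has_real_derivative line_deriv (Suc k) t) (at t)"
proof -
  have "((deriv ^^ k) K has_field_derivative (deriv ^^ Suc k) K (1 * complex_of_real t + 0))
      (at (1 * complex_of_real t + 0))"
    using holomorphic_derivI[OF holomorphic_higher_deriv[OF holo open_S] open_S assms] by simp
  from has_real_derivative_Re_affine_comp[OF this, of 1] show ?thesis
    by (simp add: line_deriv_def[abs_def])
qed

lemma U_eq: "U = (\<lambda>p. if 0 < snd p then re_hderiv K (2 * \<i>) 0 p else dalembert line_deriv 1 (-1) 0 p)"
  by (auto simp: U_def re_hderiv_def dalembert_def line_deriv_def)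

lemma upper_half_D: "(x, y) \<in> D \<Longrightarrow> 0 \<le> y \<Longrightarrow> -1 < x \<and> x < 1 \<and> \<bar>y\<bar> < \<delta>"
  unfolding D_eq by auto

lemma lower_half_D: "(x, y) \<in> D \<Longrightarrow> y \<le> 0 \<Longrightarrow> -1 < x + y \<and> x + y \<le> x - y \<and> x - y < 1"
  unfolding D_eq by auto

lemma C1_on_D: "C1_on D U"
proof -
  have upper: "has_continuous_partials_on (D \<inter> {p. 0 \<le> snd p}) (re_hderiv K (2 * \<i>) 0)
      (re_hderiv K (2 * \<i>) (Suc 0)) (re_hderiv K (2 * \<i> * \<i>) (Suc 0))"
  proof (rule has_continuous_partials_on_re_hderiv[OF holo open_S])
    fix x y assume "(x, y) \<in> D \<inter> {p. 0 \<le> snd p}"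
    then have "(x, y) \<in> D" "0 \<le> y" by auto
    then show "Complex x y \<in> S" using upper_half_D strip_in_S by blast
  qed
  have lower: "has_continuous_partials_on (D \<inter> {p. snd p \<le> 0}) (dalembert line_deriv 1 (-1) 0)
      (dalembert line_deriv 1 (-1) (Suc 0)) (dalembert line_deriv (- 1) (-1) (Suc 0))"
  proof (rule has_continuous_partials_on_dalembert[where I = "{-1<..<1}"])
    fix x y assume "(x, y) \<in> D \<inter> {p. snd p \<le> 0}"
    then have "(x, y) \<in> D" "y \<le> 0" by auto
    then show "x - y \<in> {-1<..<1} \<and> x + y \<in> {-1<..<1}" using lower_half_D by fastforce
  qed (simp add: line_deriv_has_derivative real_in_S)
  \<comment> \<open>Realness of \<open>K\<close> and \<open>K'\<close> on the axis is what makes the two halves agree to first order.\<close>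
  have "Im (K (complex_of_real x)) = 0" "Im (deriv K (complex_of_real x)) = 0" if "-1 < x" "x < 1" for x
    using that real_in_S real_on_reals Im_deriv_eq_0_if_real_on_reals[OF holo open_S] by blast+
  then have seam: "re_hderiv K (2 * \<i>) 0 (x, 0) = dalembert line_deriv 1 (-1) 0 (x, 0) \<and>
      re_hderiv K (2 * \<i>) (Suc 0) (x, 0) = dalembert line_deriv 1 (-1) (Suc 0) (x, 0) \<and>
      re_hderiv K (2 * \<i> * \<i>) (Suc 0) (x, 0) = dalembert line_deriv (- 1) (-1) (Suc 0) (x, 0)"
    if "(x, 0) \<in> D" for x
    using upper_half_D[OF that] by (simp add: re_hderiv_def dalembert_def line_deriv_def complex_of_real_def)
  show ?thesis
    unfolding U_eq
    by (rule has_continuous_partials_on_imp_C1_on[OF has_continuous_partials_on_paste_horizontal[OF upper lower seam]])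
qed

lemma open_D1: "open D1"
proof -
  have "D1 = {p. -1 < fst p} \<inter> {p. fst p < 1} \<inter> {p. 0 < snd p} \<inter> {p. snd p < \<delta>}"
    by (auto simp: D1_def)
  then show ?thesis by (simp add: open_Int open_Collect_less continuous_intros)
qed

lemma D1_in_S: "(x, y) \<in> D1 \<Longrightarrow> Complex x y \<in> S"
  by (auto simp: D1_def intro: strip_in_S)

lemma harmonic_on_D1:
  shows "C2_on D1 U" and "\<And>p. p \<in> D1 \<Longrightarrow> pdx (pdx U) p + pdy (pdy U) p = 0"
  by (rule re_holomorphic_C2_harmonic[OF holo open_S open_D1 D1_in_S, where c = "2 * \<i>"];
      auto simp: U_def D1_def)+

lemma wave_on_D2:
  shows "C2_on D2 U" and "\<And>p. p \<in> D2 \<Longrightarrow> pdx (pdx U) p = pdy (pdy U) p"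
proof -
  note wave = dalembert_C2_wave[where I = "{-1<..<1}" and g = line_deriv and a = 1 and b = "-1" and U = U,
      OF _ open_D2]
  have "line_deriv 0 t = Re (K t)" for t by (simp add: line_deriv_def)
  then have "U p = 1 * line_deriv 0 (fst p - snd p) + - 1 * line_deriv 0 (fst p + snd p)" if "p \<in> D2" for p
    using that by (auto simp: U_def D2_def)
  with wave show "C2_on D2 U" "\<And>p. p \<in> D2 \<Longrightarrow> pdx (pdx U) p = pdy (pdy U) p"
    by (auto simp: D2_def intro: line_deriv_has_derivative real_in_S)
qed

lemma U_pos_on_D1:
  assumes "p \<in> D1" shows "0 < U p"
proof -
  obtain x y where p: "p = (x, y)" and x: "-1 < x" "x < 1" and y: "0 < y" "y < \<delta>"
    using assms by (auto simp: D1_def)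
  have "re_hderiv K (2 * \<i>) 0 (x, 0) < re_hderiv K (2 * \<i>) 0 (x, y)"
  proof (rule DERIV_pos_imp_increasing[where f = "\<lambda>t. re_hderiv K (2 * \<i>) 0 (x, t)", OF y(1)])
    fix s assume s: "0 \<le> s" "s \<le> y"
    then have "(x, s) \<in> {(x, s). -1 < x \<and> x < 1 \<and> \<bar>s\<bar> < \<delta>}" using x y by auto
    moreover have "has_continuous_partials_on {(x, s). -1 < x \<and> x < 1 \<and> \<bar>s\<bar> < \<delta>}
        (re_hderiv K (2 * \<i>) 0) (re_hderiv K (2 * \<i>) (Suc 0)) (re_hderiv K (2 * \<i> * \<i>) (Suc 0))"
      by (rule has_continuous_partials_on_re_hderiv[OF holo open_S]) (auto intro: strip_in_S)
    ultimately have "((\<lambda>t. re_hderiv K (2 * \<i>) 0 (x, t)) has_real_derivative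
        - 2 * Re (deriv K (Complex x s))) (at s)"
      by (auto simp: has_continuous_partials_on_def re_hderiv_def)
    moreover have "Re (deriv K (Complex x s)) < 0" using strip x s y by simp
    ultimately show "\<exists>l. ((\<lambda>t. re_hderiv K (2 * \<i>) 0 (x, t)) has_real_derivative l) (at s) \<and> 0 < l"
      by (intro exI conjI) auto
  qed
  moreover have "re_hderiv K (2 * \<i>) 0 (x, 0) = 0"
    using real_on_reals[OF real_in_S[OF x]] by (simp add: re_hderiv_def complex_of_real_def)
  ultimately show ?thesis using y by (simp add: p U_def re_hderiv_def)
qed

lemma U_neg_on_D2:
  assumes "p \<in> D2" shows "U p < 0"
proof -
  obtain x y where p: "p = (x, y)" and xy: "y < 0" "-1 < x + y" "x - y < 1"
    using assms by (auto simp: D2_def)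
  have "line_deriv 0 (x + y) > line_deriv 0 (x - y)"
  proof (rule DERIV_neg_imp_decreasing[where f = "line_deriv 0"])
    show "x + y < x - y" using xy by simp
    fix t assume "x + y \<le> t" "t \<le> x - y"
    then have t: "-1 < t" "t < 1" using xy by auto
    have "Re (deriv K (Complex t 0)) < 0" using strip t \<delta>_pos by simp
    then show "\<exists>l. (line_deriv 0 has_real_derivative l) (at t) \<and> l < 0"
      using line_deriv_has_derivative[OF real_in_S[OF t], of 0]
      by (intro exI conjI) (auto simp: line_deriv_def complex_of_real_def)
  qed
  then show ?thesis using xy by (simp add: p U_def line_deriv_def)
qed

lemma sign_equation:
  assumes "p \<in> D1 \<union> D2" shows "pdx (pdx U) p + sgn (U p) * pdy (pdy U) p = 0"
proof (cases "p \<in> D1")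
  case True
  then show ?thesis using harmonic_on_D1(2) U_pos_on_D1 by simp
next
  case False
  then have "p \<in> D2" using assms by blast
  then show ?thesis using wave_on_D2(2) U_neg_on_D2 by simp
qed

end

locale real_analytic_mixed_problem =
  mixed_problem "\<lambda>w. F ((w - 1) / 2)" "{w. (w - 1) / 2 \<in> S}" \<delta>
  for F :: "complex \<Rightarrow> complex" and S :: "complex set" and \<delta> :: real +
  fixes f :: "real \<Rightarrow> real"
  assumes open_F_domain: "open S" and holomorphic_F: "F holomorphic_on S"
    and segment_in_S: "\<And>x. x \<in> {-1..0} \<Longrightarrow> complex_of_real x \<in> S"
    and F_real: "\<And>t. complex_of_real t \<in> S \<Longrightarrow> F (complex_of_real t) = complex_of_real (f t)"
    and F_cnj: "\<And>z. z \<in> S \<Longrightarrow> cnj z \<in> S \<and> F (cnj z) = cnj (F z)"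
begin

lemma Re_F_affine: "(t - 1) / 2 \<in> {-1..0} \<Longrightarrow> Re (F ((complex_of_real t - 1) / 2)) = f ((t - 1) / 2)"
  using F_real[OF segment_in_S, of "(t - 1) / 2"] by simp

lemma U_on_D2: "(x, y) \<in> D2 \<Longrightarrow> U (x, y) = f ((x - y - 1) / 2) - f ((x + y - 1) / 2)"
  using Re_F_affine[of "x - y"] Re_F_affine[of "x + y"] by (simp add: U_def D2_def)

lemma U_on_characteristic:
  assumes "f (-1) = 0" "x \<in> {-1..0}"
  shows "U (x, - x - 1) = f x"
  using assms Re_F_affine[of "2 * x + 1"] Re_F_affine[of "-1"] by (simp add: U_def)

lemma U_on_D1:
  assumes "(x, y) \<in> D1"
  shows "(Complex x y - 1) / 2 \<in> S" "(cnj (Complex x y) - 1) / 2 \<in> S"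
    and "complex_of_real (U (x, y)) = \<i> * (F ((Complex x y - 1) / 2) - F ((cnj (Complex x y) - 1) / 2))"
proof -
  show w: "(Complex x y - 1) / 2 \<in> S" using D1_in_S[OF assms] by simp
  have "(cnj (Complex x y) - 1) / 2 = cnj ((Complex x y - 1) / 2)" by (simp add: complex_eq_iff)
  then show "(cnj (Complex x y) - 1) / 2 \<in> S"
    "complex_of_real (U (x, y)) = \<i> * (F ((Complex x y - 1) / 2) - F ((cnj (Complex x y) - 1) / 2))"
    using w F_cnj[OF w] assms by (simp_all add: U_def D1_def complex_eq_iff)
qed

end

lemma mixed_problem_from_real_analytic:
  fixes f :: "real \<Rightarrow> real"
  assumes "open S0" "{-1..0} \<subseteq> S0" "real_analytic_on f S0"
    and f_deriv: "\<And>x. x \<in> {-1..0} \<Longrightarrow> deriv f x < 0"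
  obtains S F \<delta> where "real_analytic_mixed_problem F S \<delta> f"
proof -
  obtain S F where "open S" and F: "F holomorphic_on S" and "complex_of_real ` S0 \<subseteq> S"
    and cnj: "\<And>z. z \<in> S \<Longrightarrow> cnj z \<in> S \<and> F (cnj z) = cnj (F z)"
    and real: "\<And>t. complex_of_real t \<in> S \<Longrightarrow> F (complex_of_real t) = complex_of_real (f t)"
    using real_analytic_on_holomorphic_extension[OF assms(3)] by metis
  note S = \<open>open S\<close> \<open>complex_of_real ` S0 \<subseteq> S\<close>
  define K where "K w = F ((w - 1) / 2)" for w
  define SK where "SK = {w. (w - 1) / 2 \<in> S}"
  have "open SK" unfolding SK_def by (intro open_vimage[of S, unfolded vimage_def] S continuous_intros) simp
  have "K holomorphic_on SK"
  proof -
    have "(\<lambda>w. (w - 1) / 2) holomorphic_on SK" by (intro holomorphic_intros) simp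
    from holomorphic_on_compose_gen[OF this F] show ?thesis by (auto simp: K_def[abs_def] SK_def o_def)
  qed
  have deriv_K: "deriv K w = deriv F ((w - 1) / 2) / 2" if "w \<in> SK" for w
  proof -
    have "(F has_field_derivative deriv F ((w - 1) / 2)) (at ((w - 1) / 2))"
      using holomorphic_derivI[OF F S(1)] that by (simp add: SK_def)
    moreover have "((\<lambda>w. (w - 1) / 2) has_field_derivative 1 / 2) (at w)"
      by (auto intro!: derivative_eq_intros)
    ultimately have "(K has_field_derivative deriv F ((w - 1) / 2) * (1 / 2)) (at w)"
      unfolding K_def[abs_def] by (rule DERIV_chain2)
    then show ?thesis by (simp add: DERIV_imp_deriv)
  qed
  have segment: "complex_of_real ` {-1..1} \<subseteq> {w \<in> SK. Re (deriv K w) < 0}"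
  proof (rule image_subsetI)
    fix t :: real assume "t \<in> {-1..1}"
    then have s: "(t - 1) / 2 \<in> {-1..0}" by auto
    then have in_S: "complex_of_real ((t - 1) / 2) \<in> S" using S(2) assms(2) by blast
    have "deriv f ((t - 1) / 2) = Re (deriv F (complex_of_real ((t - 1) / 2)))"
      by (rule DERIV_imp_deriv[OF has_real_derivative_real_restriction[OF F S(1) in_S real]])
    moreover have in_SK: "complex_of_real t \<in> SK" using in_S by (simp add: SK_def)
    ultimately have "Re (deriv K (complex_of_real t)) = deriv f ((t - 1) / 2) / 2"
      unfolding deriv_K[OF in_SK] by simp
    then show "complex_of_real t \<in> {w \<in> SK. Re (deriv K w) < 0}"
      using f_deriv[OF s] in_SK by simp
  qed
  have "compact (complex_of_real ` {-1..1})"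
    by (intro compact_continuous_image continuous_intros compact_Icc)
  moreover have "open {w \<in> SK. Re (deriv K w) < 0}"
  proof -
    have "continuous_on SK (\<lambda>w. Re (deriv K w))"
      using holomorphic_on_imp_continuous_on[OF holomorphic_deriv[OF \<open>K holomorphic_on SK\<close> \<open>open SK\<close>]]
      by (intro continuous_intros)
    from continuous_open_preimage[OF this \<open>open SK\<close> open_lessThan[of 0]]
    show ?thesis by (simp add: vimage_def Int_def)
  qed
  ultimately obtain \<delta> where "\<delta> > 0"
    and \<delta>: "(\<Union>w\<in>complex_of_real ` {-1..1}. ball w \<delta>) \<subseteq> {w \<in> SK. Re (deriv K w) < 0}"
    using segment by (rule compact_subset_open_imp_ball_epsilon_subset)
  have "mixed_problem K SK \<delta>"
  proof
    show "Im (K (complex_of_real t)) = 0" if "complex_of_real t \<in> SK" for t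
      using real[of "(t - 1) / 2"] that by (simp add: K_def SK_def)
    show "Complex x y \<in> SK \<and> Re (deriv K (Complex x y)) < 0" if "-1 < x" "x < 1" "\<bar>y\<bar> < \<delta>" for x y
    proof -
      have "complex_of_real x - Complex x y = Complex 0 (- y)" by (simp add: complex_eq_iff)
      then have "dist (complex_of_real x) (Complex x y) = cmod (Complex 0 (- y))"
        by (simp only: dist_norm)
      then have "Complex x y \<in> ball (complex_of_real x) \<delta>"
        using that by (simp add: complex_norm)
      moreover have "complex_of_real x \<in> complex_of_real ` {-1..1}" using that by auto
      ultimately show ?thesis using \<delta> by blast
    qed
  qed fact+
  then have "mixed_problem (\<lambda>w. F ((w - 1) / 2)) {w. (w - 1) / 2 \<in> S} \<delta>"
    unfolding K_def[abs_def] SK_def .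
  moreover have "real_analytic_mixed_problem_axioms F S f"
    using S assms(2) F real cnj by unfold_locales blast+
  ultimately show ?thesis by (intro that real_analytic_mixed_problem.intro)
qed

theorem mainTheorem2:
  fixes f :: "real \<Rightarrow> real"
  assumes analytic: "\<exists>S. open S \<and> {-1..0} \<subseteq> S \<and> real_analytic_on f S"
    and f_m1: "f (-1) = 0"
    and f_deriv: "\<forall>x\<in>{-1..0::real}. deriv f x < 0"
  shows "\<exists>(D1 :: (real \<times> real) set) (U :: real \<times> real \<Rightarrow> real).
     open D1 \<and> D1 \<subseteq> {p. snd p > 0} \<and>
     (let D = D1 \<union> {(x, 0) | x. -1 < x \<and> x < 1} \<union> D2 in
        open D \<and> connected D \<and> C1_on D U) \<and>
     C2_on D1 U \<and> C2_on D2 U \<and>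
     (\<forall>p\<in>D1 \<union> D2. pdx (pdx U) p + sgn (U p) * pdy (pdy U) p = 0) \<and>
     (\<forall>p\<in>D1. U p > 0) \<and> (\<forall>p\<in>D2. U p < 0) \<and>
     (\<forall>x\<in>{-1..0}. U (x, - x - 1) = f x) \<and>
     (\<forall>(x, y)\<in>D2. U (x, y) = f ((x - y - 1) / 2) - f ((x + y - 1) / 2)) \<and>
     (\<exists>S F. open S \<and> F holomorphic_on S \<and>
        (\<forall>x\<in>{-1..0::real}. complex_of_real x \<in> S \<and> F (complex_of_real x) = complex_of_real (f x)) \<and>
        (\<forall>(x, y)\<in>D1. (Complex x y - 1) / 2 \<in> S \<and> (cnj (Complex x y) - 1) / 2 \<in> S \<and>
           complex_of_real (U (x, y)) = \<i> * (F ((Complex x y - 1) / 2) - F ((cnj (Complex x y) - 1) / 2))))"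
proof -
  obtain S0 where S0: "open S0" "{-1..0} \<subseteq> S0" "real_analytic_on f S0" using analytic by blast
  obtain S F \<delta> where "real_analytic_mixed_problem F S \<delta> f"
    using mixed_problem_from_real_analytic[OF S0 f_deriv[rule_format]] .
  then interpret real_analytic_mixed_problem F S \<delta> f .
  show ?thesis
  proof (intro exI[of _ D1] exI[of _ U] conjI)
    show "open D1" by (rule open_D1)
    show "D1 \<subseteq> {p. 0 < snd p}" by (auto simp: D1_def)
    show "let D = D1 \<union> {(x, 0) | x. -1 < x \<and> x < 1} \<union> D2 in open D \<and> connected D \<and> C1_on D U"
      using open_D connected_D C1_on_D by simp
    show "C2_on D1 U" "C2_on D2 U" by (fact harmonic_on_D1(1) wave_on_D2(1))+
    show "\<forall>p\<in>D1 \<union> D2. pdx (pdx U) p + sgn (U p) * pdy (pdy U) p = 0" using sign_equation by blast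
    show "\<forall>p\<in>D1. 0 < U p" "\<forall>p\<in>D2. U p < 0" using U_pos_on_D1 U_neg_on_D2 by blast+
    show "\<forall>x\<in>{-1..0}. U (x, - x - 1) = f x" using U_on_characteristic[OF f_m1] by blast
    show "\<forall>(x, y)\<in>D2. U (x, y) = f ((x - y - 1) / 2) - f ((x + y - 1) / 2)" using U_on_D2 by blast
    show "\<exists>S F. open S \<and> F holomorphic_on S \<and>
        (\<forall>x\<in>{-1..0::real}. complex_of_real x \<in> S \<and> F (complex_of_real x) = complex_of_real (f x)) \<and>
        (\<forall>(x, y)\<in>D1. (Complex x y - 1) / 2 \<in> S \<and> (cnj (Complex x y) - 1) / 2 \<in> S \<and>
           complex_of_real (U (x, y)) = \<i> * (F ((Complex x y - 1) / 2) - F ((cnj (Complex x y) - 1) / 2)))"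
      using open_F_domain holomorphic_F segment_in_S F_real U_on_D1 by (intro exI conjI ballI) auto
  qed
qed

end
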